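(* Let $\mu$ be a finite Borel measure on $\mathbb{R}$ with all moments $y_k=\int x^kd\mu$ finite, $\mathbf{y}=(y_k)$, and assume $\mathbf{H}_d(\mathbf{y})\succ0$ for all $d\in\mathbb{N}$. Fix $d\in\mathbb{N}$ and let $$a_d=\max_{a\in\mathbb{R}}\{a:\mathbf{H}_d(\theta_a\mathbf{y})\succeq0\},\qquad b_d=\min_{b\in\mathbb{R}}\{b:\mathbf{H}_d(-\theta_b\mathbf{y})\succeq0\},$$ $$a_d^*=\inf\Big\{\int x\,\sigma(x)\,d\mu(x):\ \sigma\in\Sigma[x]_d,\ \int\sigma\,d\mu=1\Big\},\qquad b_d^*=\sup\Big\{\int x\,\sigma(x)\,d\mu(x):\ \sigma\in\Sigma[x]_d,\ \int\sigma\,d\mu=1\Big\}.$$ Then $a_d=a_d^*$ and $b_d=b_d^*$; the infimum defining $a_d^*$ is attained at some $\sigma^*\in\Sigma[x]_d$ and the supremum defining $b_d^*$ is attained at some $\psi^*\in\Sigma[x]_d$; and $$\int(x-a_d)\,\sigma^*(x)\,d\mu(x)=0=\int(b_d-x)\,\psi^*(x)\,d\mu(x).$$ Moreover, if $\sigma^*=\sum_\ell p_\ell^2$ with polynomials $p_\ell$ of degree at most $d$ and coefficient vectors $\mathbf{p}_\ell\in\mathbb{R}^{d+1}$ (in the basis $1,x,\ldots,x^d$), then each $\mathbf{p}_\ell$ lies in the kernel of $\mathbf{H}_d(\theta_{a_d}\mathbf{y})$.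
   Context: $\Sigma[x]_d$ denotes the set of real univariate polynomials of degree at most $2d$ that are sums of squares of polynomials. For a sequence $\mathbf{y}=(y_k)_{k\in\mathbb{N}}$ and a polynomial $\theta(x)=\sum_{k=0}^s\theta_kx^k$, $\mathbf{H}_d(\theta\,\mathbf{y})$ is the $(d+1)\times(d+1)$ symmetric matrix with entries $\sum_{k=0}^s\theta_k\,y_{i+j+k-2}$, $i,j=1,\ldots,d+1$; $\mathbf{H}_d(\mathbf{y})$ is the Hankel matrix with entries $y_{i+j-2}$. For $a\in\mathbb{R}$, $\theta_a(x)=x-a$, so $\mathbf{H}_d(\theta_a\mathbf{y})(i,j)=y_{i+j-1}-a\,y_{i+j-2}$ and $\mathbf{H}_d(-\theta_b\mathbf{y})(i,j)=b\,y_{i+j-2}-y_{i+j-1}$. $\succeq0$ (resp. $\succ0$) denotes positive semidefiniteness (resp. definiteness). *)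

theory Defs
  imports "HOL-Analysis.Analysis" "HOL-Computational_Algebra.Polynomial"
begin

definition moment_seq :: "real measure \<Rightarrow> nat \<Rightarrow> real" where
  "moment_seq M k = integral\<^sup>L M (\<lambda>x. x ^ k)"

text \<open>Localizing Hankel matrix H_d(theta y), indexed by i, j in {0..d}
  (0-based, i.e. entry (i,j) here is entry (i+1,j+1) of the paper):
  entry = sum_k theta_k * y_(i+j+k).\<close>
definition hankel_loc :: "nat \<Rightarrow> real poly \<Rightarrow> (nat \<Rightarrow> real) \<Rightarrow> nat \<Rightarrow> nat \<Rightarrow> real" where
  "hankel_loc d \<theta> y i j = (\<Sum>k\<le>degree \<theta>. coeff \<theta> k * y (i + j + k))"

definition hankel :: "nat \<Rightarrow> (nat \<Rightarrow> real) \<Rightarrow> nat \<Rightarrow> nat \<Rightarrow> real" where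
  "hankel d y = hankel_loc d 1 y"

definition theta :: "real \<Rightarrow> real poly" where
  "theta a = [:-a, 1:]"

definition psd :: "nat \<Rightarrow> (nat \<Rightarrow> nat \<Rightarrow> real) \<Rightarrow> bool" where
  "psd d A \<longleftrightarrow> (\<forall>v::nat \<Rightarrow> real. 0 \<le> (\<Sum>i\<le>d. \<Sum>j\<le>d. v i * A i j * v j))"

definition pd :: "nat \<Rightarrow> (nat \<Rightarrow> nat \<Rightarrow> real) \<Rightarrow> bool" where
  "pd d A \<longleftrightarrow> (\<forall>v::nat \<Rightarrow> real. (\<exists>i\<le>d. v i \<noteq> 0) \<longrightarrow> 0 < (\<Sum>i\<le>d. \<Sum>j\<le>d. v i * A i j * v j))"

definition sos_deg :: "nat \<Rightarrow> real poly \<Rightarrow> bool" where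
  "sos_deg d \<sigma> \<longleftrightarrow> degree \<sigma> \<le> 2 * d \<and> (\<exists>ps. \<sigma> = (\<Sum>p\<leftarrow>ps. p ^ 2))"

end

theory Submission
  imports Defs
begin

(* Write y for the moment sequence, N(v) = v^T H_d(y) v and X(v) = v^T H_d(x y) v, so that
   v^T H_d(theta_a y) v = X(v) - a N(v).  Since H_d(y) is positive definite, the generalized
   Rayleigh quotient X(v)/N(v) attains its minimum and maximum (compactness of the unit
   sphere in R^(d+1)); these extremal values are exactly a_d and b_d.  On the measure side,
   the integral of theta * p^2 is the quadratic form of H_d(theta y) at the coefficient vector
   of p.  Hence psd localizing matrices bound the first moment of every feasible sigma (weak
   duality), and the square of the normalized extremal vector attains the bound (strong
   duality).  An optimal sigma makes the psd form H_d(theta_(a_d) y) vanish on its summands,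
   which therefore lie in its kernel. *)

definition quad_form :: "(nat \<Rightarrow> nat \<Rightarrow> real) \<Rightarrow> nat \<Rightarrow> (nat \<Rightarrow> real) \<Rightarrow> real" where
  "quad_form A d v = (\<Sum>i\<le>d. \<Sum>j\<le>d. v i * A i j * v j)"

lemma psd_iff_quad_form: "psd d A \<longleftrightarrow> (\<forall>v. 0 \<le> quad_form A d v)"
  by (simp add: psd_def quad_form_def)

lemma pd_iff_quad_form: "pd d A \<longleftrightarrow> (\<forall>v. (\<exists>i\<le>d. v i \<noteq> 0) \<longrightarrow> 0 < quad_form A d v)"
  by (simp add: pd_def quad_form_def)

lemma quad_form_cong: "(\<And>i. i \<le> d \<Longrightarrow> u i = v i) \<Longrightarrow> quad_form A d u = quad_form A d v"
  by (simp add: quad_form_def)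

lemma quad_form_scale: "quad_form A d (\<lambda>i. c * v i) = c ^ 2 * quad_form A d v"
  by (simp add: quad_form_def sum_distrib_left power2_eq_square mult_ac)

lemma quad_form_uminus: "quad_form (\<lambda>i j. - A i j) d v = - quad_form A d v"
  by (simp add: quad_form_def sum_negf)

(* Coefficient vectors carry the product topology of nat => real. *)
lemma continuous_on_quad_form: "continuous_on S (quad_form A d)"
proof -
  have coord: "continuous_on S (\<lambda>v::nat \<Rightarrow> real. v i)" for i
    by (rule continuous_on_subset[OF continuous_on_product_coordinates]) auto
  show ?thesis
    unfolding quad_form_def by (intro continuous_intros coord)
qed

(* The unit sphere of R^(d+1), embedded as the vectors vanishing beyond d. *)
definition coeff_sphere :: "nat \<Rightarrow> (nat \<Rightarrow> real) set" where
  "coeff_sphere d = {v. (\<forall>i>d. v i = 0) \<and> (\<Sum>i\<le>d. v i ^ 2) = 1}"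

lemma coeff_sphere_nonzero: "v \<in> coeff_sphere d \<Longrightarrow> \<exists>i\<le>d. v i \<noteq> 0"
proof (rule ccontr)
  assume "v \<in> coeff_sphere d" and "\<not> (\<exists>i\<le>d. v i \<noteq> 0)"
  then show False by (simp add: coeff_sphere_def)
qed

lemma coeff_sphere_nonempty: "coeff_sphere d \<noteq> {}"
proof -
  have "(\<Sum>i\<le>d. (if i = 0 then 1 else 0 :: real) ^ 2) = (\<Sum>i\<le>d. if i = 0 then 1 else 0)"
    by (rule sum.cong) auto
  then have "(\<lambda>i. if i = 0 then 1 else 0) \<in> coeff_sphere d"
    by (simp add: coeff_sphere_def)
  then show ?thesis by blast
qed

lemma compact_coeff_sphere: "compact (coeff_sphere d)"
proof -
  define box where "box = PiE UNIV (\<lambda>i::nat. if i \<le> d then {-1..1::real} else {0})"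
  have "compactin (product_topology (\<lambda>i. euclidean) UNIV) box"
    unfolding box_def by (subst compactin_PiE) auto
  then have "compact box"
    by (metis euclidean_product_topology compactin_euclidean_iff)
  moreover have "closed {v::nat \<Rightarrow> real. (\<Sum>i\<le>d. v i ^ 2) = 1}"
    by (intro closed_Collect_eq continuous_intros continuous_on_product_coordinates)
  moreover have "coeff_sphere d = box \<inter> {v. (\<Sum>i\<le>d. v i ^ 2) = 1}"
  proof -
    have "\<bar>v i\<bar> \<le> 1" if "(\<Sum>i\<le>d. v i ^ 2) = 1" "i \<le> d" for v :: "nat \<Rightarrow> real" and i
      using member_le_sum[of i "{..d}" "\<lambda>i. v i ^ 2"] that by (simp add: abs_square_le_1)
    then show ?thesis
      by (auto simp: coeff_sphere_def box_def PiE_iff abs_le_iff split: if_splits)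
  qed
  ultimately show ?thesis by (simp add: compact_Int_closed)
qed

lemma normalize_to_coeff_sphere:
  assumes "\<exists>i\<le>d. v i \<noteq> 0"
  obtains s u where "s > 0" "u \<in> coeff_sphere d" "\<And>A. quad_form A d v = s ^ 2 * quad_form A d u"
proof -
  define s where "s = sqrt (\<Sum>i\<le>d. v i ^ 2)"
  obtain k where "k \<le> d" "v k \<noteq> 0" using assms by blast
  then have "0 < v k ^ 2" "v k ^ 2 \<le> (\<Sum>i\<le>d. v i ^ 2)"
    by (auto intro: member_le_sum)
  then have sum_pos: "0 < (\<Sum>i\<le>d. v i ^ 2)" by linarith
  then have s_pos: "s > 0" and s_sq: "s ^ 2 = (\<Sum>i\<le>d. v i ^ 2)"
    by (auto simp: s_def)
  define u where "u i = (if i \<le> d then v i / s else 0)" for i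
  have "(\<Sum>i\<le>d. u i ^ 2) = (\<Sum>i\<le>d. v i ^ 2) / s ^ 2"
    by (simp add: u_def power_divide sum_divide_distrib)
  then have "u \<in> coeff_sphere d"
    using s_sq sum_pos by (simp add: coeff_sphere_def u_def)
  moreover have "quad_form A d v = s ^ 2 * quad_form A d u" for A
  proof -
    have "quad_form A d v = quad_form A d (\<lambda>i. s * u i)"
      using s_pos by (intro quad_form_cong) (simp add: u_def)
    then show ?thesis by (simp add: quad_form_scale)
  qed
  ultimately show ?thesis using s_pos that by blast
qed

lemma rayleigh_quotient_min:
  assumes "pd d B"
  obtains w where "\<exists>i\<le>d. w i \<noteq> 0"
    and "\<And>v. quad_form A d w * quad_form B d v \<le> quad_form A d v * quad_form B d w"
proof -
  have B_pos: "quad_form B d v > 0" if "\<exists>i\<le>d. v i \<noteq> 0" for v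
    using assms that by (simp add: pd_iff_quad_form)
  have "continuous_on (coeff_sphere d) (\<lambda>v. quad_form A d v / quad_form B d v)"
    using B_pos coeff_sphere_nonzero
    by (intro continuous_on_divide continuous_on_quad_form) (metis less_irrefl)
  then obtain w where w: "w \<in> coeff_sphere d"
    and w_min: "\<And>u. u \<in> coeff_sphere d \<Longrightarrow>
                  quad_form A d w / quad_form B d w \<le> quad_form A d u / quad_form B d u"
    using continuous_attains_inf[OF compact_coeff_sphere coeff_sphere_nonempty] by blast
  have "quad_form A d w * quad_form B d v \<le> quad_form A d v * quad_form B d w" for v
  proof (cases "\<exists>i\<le>d. v i \<noteq> 0")
    case True
    then obtain s u where "s > 0" "u \<in> coeff_sphere d"
      and scaled: "\<And>A. quad_form A d v = s ^ 2 * quad_form A d u"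
      using normalize_to_coeff_sphere[OF True] by metis
    then have "quad_form A d w / quad_form B d w \<le> quad_form A d v / quad_form B d v"
      using w_min by (simp add: scaled)
    then show ?thesis
      using B_pos True coeff_sphere_nonzero[OF w] by (simp add: divide_le_eq le_divide_eq mult_ac)
  next
    case False
    then show ?thesis by (simp add: quad_form_def)
  qed
  then show ?thesis using that coeff_sphere_nonzero[OF w] by blast
qed

(* A null vector v of a symmetric positive semidefinite form lies in the kernel of the matrix:
   otherwise the form would become negative at v - t (A v) for a small t > 0. *)
lemma psd_null_vector_in_kernel:
  assumes sym: "\<And>i j. A i j = A j i" and psd: "psd d A" and null: "quad_form A d v = 0"
  shows "\<forall>i\<le>d. (\<Sum>j\<le>d. A i j * v j) = 0"
proof -
  define g where "g i = (\<Sum>j\<le>d. A i j * v j)" for i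
  define G where "G = (\<Sum>i\<le>d. g i ^ 2)"
  define q where "q = quad_form A d g"
  have nonneg: "0 \<le> quad_form A d u" for u
    using psd by (simp add: psd_iff_quad_form)
  have mixed1: "(\<Sum>i\<le>d. \<Sum>j\<le>d. g i * A i j * v j) = G"
    by (simp add: G_def g_def power2_eq_square sum_distrib_left mult_ac)
  have mixed2: "(\<Sum>i\<le>d. \<Sum>j\<le>d. v i * A i j * g j) = G"
    using mixed1 by (subst sum.swap) (simp add: sym mult_ac)
  have expand: "quad_form A d (\<lambda>i. v i - t * g i) = quad_form A d v - 2 * t * G + t ^ 2 * q"
    for t
  proof -
    have "quad_form A d (\<lambda>i. v i - t * g i) = quad_form A d v
        - t * (\<Sum>i\<le>d. \<Sum>j\<le>d. g i * A i j * v j) - t * (\<Sum>i\<le>d. \<Sum>j\<le>d. v i * A i j * g j)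
        + t ^ 2 * q"
      by (simp add: quad_form_def q_def algebra_simps sum.distrib sum_subtractf sum_distrib_left
          power2_eq_square)
    then show ?thesis by (simp add: mixed1 mixed2)
  qed
  have "q \<ge> 0" using nonneg by (simp add: q_def)
  define t where "t = G / (q + 1)"
  have "0 \<le> - 2 * t * G + t ^ 2 * q"
    using nonneg[of "\<lambda>i. v i - t * g i"] null by (simp add: expand)
  then have "0 \<le> (q + 1) ^ 2 * (- 2 * t * G + t ^ 2 * q)" by simp
  also have "\<dots> = - (G ^ 2 * (q + 2))"
  proof -
    have "G = t * (q + 1)" using \<open>q \<ge> 0\<close> by (simp add: t_def)
    then show ?thesis by (simp add: power2_eq_square algebra_simps)
  qed
  finally have "G ^ 2 * (q + 2) \<le> 0" by simp
  then have "G = 0"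
    using \<open>q \<ge> 0\<close> by (simp add: mult_le_0_iff)
  then show ?thesis
    by (simp add: G_def g_def sum_nonneg_eq_0_iff)
qed

lemma hankel_entry: "hankel d y i j = y (i + j)"
  by (simp add: hankel_def hankel_loc_def)

lemma hankel_loc_theta: "hankel_loc d (theta a) y i j = y (i + j + 1) - a * y (i + j)"
  by (simp add: hankel_loc_def theta_def numeral_eq_Suc atMost_Suc algebra_simps)

lemma hankel_loc_neg_theta: "hankel_loc d (- theta b) y i j = b * y (i + j) - y (i + j + 1)"
  by (simp add: hankel_loc_def theta_def numeral_eq_Suc atMost_Suc algebra_simps)

lemma hankel_loc_x: "hankel_loc d [:0, 1:] y i j = y (i + j + 1)"
  by (simp add: hankel_loc_def numeral_eq_Suc atMost_Suc)

lemma quad_form_theta: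
  "quad_form (hankel_loc d (theta a) y) d v
     = quad_form (hankel_loc d [:0, 1:] y) d v - a * quad_form (hankel d y) d v"
  by (simp add: quad_form_def hankel_loc_theta hankel_loc_x hankel_entry algebra_simps
      sum_subtractf sum_distrib_left)

lemma quad_form_neg_theta:
  "quad_form (hankel_loc d (- theta b) y) d v
     = b * quad_form (hankel d y) d v - quad_form (hankel_loc d [:0, 1:] y) d v"
  by (simp add: quad_form_def hankel_loc_neg_theta hankel_loc_x hankel_entry algebra_simps
      sum_subtractf sum_distrib_left)

lemma localizing_lower_extremum:
  assumes "pd d (hankel d y)"
  obtains w r where "quad_form (hankel d y) d w > 0"
    and "quad_form (hankel_loc d [:0, 1:] y) d w = r * quad_form (hankel d y) d w"
    and "psd d (hankel_loc d (theta r) y)"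
    and "\<And>a. psd d (hankel_loc d (theta a) y) \<Longrightarrow> a \<le> r"
proof -
  define N where "N = quad_form (hankel d y) d"
  define X where "X = quad_form (hankel_loc d [:0, 1:] y) d"
  obtain w where "\<exists>i\<le>d. w i \<noteq> 0" and min_w: "\<And>v. X w * N v \<le> X v * N w"
    using rayleigh_quotient_min[OF assms] unfolding X_def N_def by blast
  then have pos: "N w > 0" using assms by (simp add: pd_iff_quad_form N_def)
  define r where "r = X w / N w"
  have X_w: "X w = r * N w" using pos by (simp add: r_def)
  have "r * N v \<le> X v" for v
    using min_w[of v] pos by (simp add: r_def field_simps)
  then have "psd d (hankel_loc d (theta r) y)"
    by (simp add: psd_iff_quad_form quad_form_theta X_def[symmetric] N_def[symmetric])
  moreover have "a \<le> r" if "psd d (hankel_loc d (theta a) y)" for a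
  proof -
    have "0 \<le> X w - a * N w"
      using that by (simp add: psd_iff_quad_form quad_form_theta X_def N_def)
    then show ?thesis using pos by (simp add: X_w)
  qed
  ultimately show ?thesis using that pos X_w unfolding N_def X_def by blast
qed

lemma localizing_upper_extremum:
  assumes "pd d (hankel d y)"
  obtains w r where "quad_form (hankel d y) d w > 0"
    and "quad_form (hankel_loc d [:0, 1:] y) d w = r * quad_form (hankel d y) d w"
    and "psd d (hankel_loc d (- theta r) y)"
    and "\<And>b. psd d (hankel_loc d (- theta b) y) \<Longrightarrow> r \<le> b"
proof -
  define N where "N = quad_form (hankel d y) d"
  define X where "X = quad_form (hankel_loc d [:0, 1:] y) d"
  obtain w where "\<exists>i\<le>d. w i \<noteq> 0" and max_w: "\<And>v. X v * N w \<le> X w * N v"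
    using rayleigh_quotient_min[OF assms, of "\<lambda>i j. - hankel_loc d [:0, 1:] y i j"]
    unfolding X_def N_def quad_form_uminus by (metis mult_minus_left neg_le_iff_le)
  then have pos: "N w > 0" using assms by (simp add: pd_iff_quad_form N_def)
  define r where "r = X w / N w"
  have X_w: "X w = r * N w" using pos by (simp add: r_def)
  have "X v \<le> r * N v" for v
    using max_w[of v] pos by (simp add: r_def field_simps)
  then have "psd d (hankel_loc d (- theta r) y)"
    by (simp add: psd_iff_quad_form quad_form_neg_theta X_def[symmetric] N_def[symmetric])
  moreover have "r \<le> b" if "psd d (hankel_loc d (- theta b) y)" for b
  proof -
    have "0 \<le> b * N w - X w"
      using that by (simp add: psd_iff_quad_form quad_form_neg_theta X_def N_def)
    then show ?thesis using pos by (simp add: X_w)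
  qed
  ultimately show ?thesis using that pos X_w unfolding N_def X_def by blast
qed

lemma poly_as_sum_le_degree:
  fixes p :: "'a::comm_semiring_1 poly"
  assumes "degree p \<le> d"
  shows "poly p x = (\<Sum>i\<le>d. coeff p i * x ^ i)"
proof -
  have "poly p x = poly (\<Sum>i\<le>d. monom (coeff p i) i) x"
    using poly_as_sum_of_monoms'[OF assms] by simp
  then show ?thesis by (simp add: poly_sum poly_monom)
qed

lemma poly_theta [simp]: "poly (theta a) x = x - a"
  by (simp add: theta_def)

lemma poly_neg_theta [simp]: "poly (- theta b) x = b - x"
  by (simp add: theta_def)

(* A nonzero sum of squares has positive leading coefficient, and its degree dominates twice
   the degree of every summand: leading terms of squares cannot cancel. *)
lemma sum_of_squares_degree:
  fixes ps :: "real poly list"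
  shows "((\<Sum>p\<leftarrow>ps. p ^ 2) = 0 \<or> lead_coeff (\<Sum>p\<leftarrow>ps. p ^ 2) > 0) \<and>
         (\<forall>p\<in>set ps. 2 * degree p \<le> degree (\<Sum>p\<leftarrow>ps. p ^ 2))"
proof (induction ps)
  case (Cons p ps)
  define s where "s = (\<Sum>p\<leftarrow>ps. p ^ 2)"
  have IH: "s = 0 \<or> lead_coeff s > 0" "\<forall>q\<in>set ps. 2 * degree q \<le> degree s"
    using Cons.IH by (auto simp: s_def)
  have split: "(\<Sum>q\<leftarrow>p # ps. q ^ 2) = p ^ 2 + s" by (simp add: s_def)
  show ?case
  proof (cases "p = 0")
    case True
    then show ?thesis using IH by (simp add: split s_def)
  next
    case False
    define D where "D = max (2 * degree p) (degree s)"
    have deg_sq: "degree (p ^ 2) = 2 * degree p" using False by (simp add: degree_power_eq)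
    have lead_sq: "lead_coeff (p ^ 2) > 0" using False by (simp add: lead_coeff_power)
    have "coeff (p ^ 2) D \<ge> 0"
      by (cases "D = 2 * degree p") (use lead_sq deg_sq in \<open>auto simp: D_def coeff_eq_0\<close>)
    moreover have "coeff s D \<ge> 0"
      by (cases "D = degree s") (use IH(1) in \<open>auto simp: D_def coeff_eq_0\<close>)
    moreover have "coeff (p ^ 2) D > 0 \<or> coeff s D > 0"
      using lead_sq deg_sq IH(1) by (auto simp: D_def max_def)
    ultimately have top: "coeff (p ^ 2 + s) D > 0" by auto
    have "degree (p ^ 2 + s) = D"
    proof (rule antisym)
      show "degree (p ^ 2 + s) \<le> D"
        using degree_add_le_max[of "p ^ 2" s] deg_sq by (simp add: D_def)
      show "D \<le> degree (p ^ 2 + s)" using top by (intro le_degree) simp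
    qed
    then show ?thesis
      using IH(2) top unfolding split by (auto simp: D_def)
  qed
qed simp

lemma sos_summands_degree:
  fixes ps :: "real poly list"
  assumes "degree (\<Sum>p\<leftarrow>ps. p ^ 2) \<le> 2 * d"
  shows "\<forall>p\<in>set ps. degree p \<le> d"
  using sum_of_squares_degree[of ps] assms by fastforce

lemma sos_deg_decompose:
  assumes "sos_deg d \<sigma>"
  obtains ps where "\<sigma> = (\<Sum>p\<leftarrow>ps. p ^ 2)" and "\<forall>p\<in>set ps. degree p \<le> d"
  using assms sos_summands_degree unfolding sos_deg_def by blast

lemma integrable_poly:
  fixes M :: "real measure"
  assumes "\<And>k. integrable M (\<lambda>x. x ^ k)"
  shows "integrable M (poly q)"
  unfolding poly_altdef by (simp add: assms)

lemma integrable_poly_mult: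
  fixes M :: "real measure"
  assumes "\<And>k. integrable M (\<lambda>x. x ^ k)"
  shows "integrable M (\<lambda>x. poly p x * poly q x)"
proof -
  have "(\<lambda>x. poly p x * poly q x) = poly (p * q)" by (simp add: fun_eq_iff)
  then show ?thesis using integrable_poly[OF assms] by simp
qed

lemma integral_affine_times_poly:
  fixes M :: "real measure"
  assumes moments: "\<And>k. integrable M (\<lambda>x. x ^ k)"
  shows "integral\<^sup>L M (\<lambda>x. (x - a) * poly \<sigma> x)
           = integral\<^sup>L M (\<lambda>x. x * poly \<sigma> x) - a * integral\<^sup>L M (poly \<sigma>)"
    and "integral\<^sup>L M (\<lambda>x. (b - x) * poly \<sigma> x)
           = b * integral\<^sup>L M (poly \<sigma>) - integral\<^sup>L M (\<lambda>x. x * poly \<sigma> x)"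
proof -
  have "integrable M (\<lambda>x. x * poly \<sigma> x)"
    using integrable_poly_mult[OF moments, of "[:0, 1:]" \<sigma>] by simp
  moreover have "integrable M (poly \<sigma>)" by (rule integrable_poly[OF moments])
  ultimately show "integral\<^sup>L M (\<lambda>x. (x - a) * poly \<sigma> x)
           = integral\<^sup>L M (\<lambda>x. x * poly \<sigma> x) - a * integral\<^sup>L M (poly \<sigma>)"
    and "integral\<^sup>L M (\<lambda>x. (b - x) * poly \<sigma> x)
           = b * integral\<^sup>L M (poly \<sigma>) - integral\<^sup>L M (\<lambda>x. x * poly \<sigma> x)"
    by (simp_all add: left_diff_distrib)
qed

lemma integral_localized_square:
  fixes M :: "real measure"
  assumes moments: "\<And>k. integrable M (\<lambda>x. x ^ k)" and deg: "degree p \<le> d"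
  shows "integral\<^sup>L M (\<lambda>x. poly \<theta> x * poly p x ^ 2)
           = quad_form (hankel_loc d \<theta> (moment_seq M)) d (coeff p)"
proof -
  have expand: "poly \<theta> x * poly p x ^ 2
      = (\<Sum>i\<le>d. \<Sum>j\<le>d. \<Sum>k\<le>degree \<theta>. coeff p i * coeff p j * coeff \<theta> k * x ^ (i + j + k))" for x
    by (simp add: poly_altdef[of \<theta>] poly_as_sum_le_degree[OF deg] power2_eq_square
        sum_product sum_distrib_left power_add mult_ac)
  show "integral\<^sup>L M (\<lambda>x. poly \<theta> x * poly p x ^ 2)
           = quad_form (hankel_loc d \<theta> (moment_seq M)) d (coeff p)"
    unfolding expand
    by (simp add: integral_sum integrable_sum moments moment_seq_def quad_form_def
        hankel_loc_def sum_distrib_left mult_ac)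
qed

lemma integral_localized_sos:
  fixes M :: "real measure"
  assumes moments: "\<And>k. integrable M (\<lambda>x. x ^ k)" and deg: "\<forall>p\<in>set ps. degree p \<le> d"
  shows "integral\<^sup>L M (\<lambda>x. poly \<theta> x * poly (\<Sum>p\<leftarrow>ps. p ^ 2) x)
           = (\<Sum>p\<leftarrow>ps. quad_form (hankel_loc d \<theta> (moment_seq M)) d (coeff p))"
  using deg
proof (induction ps)
  case (Cons p ps)
  have split: "poly \<theta> x * poly (\<Sum>q\<leftarrow>p # ps. q ^ 2) x
      = poly \<theta> x * poly p x ^ 2 + poly \<theta> x * poly (\<Sum>q\<leftarrow>ps. q ^ 2) x" for x
    by (simp add: algebra_simps)
  have "integrable M (\<lambda>x. poly \<theta> x * poly (p ^ 2) x)"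
    and "integrable M (\<lambda>x. poly \<theta> x * poly (\<Sum>q\<leftarrow>ps. q ^ 2) x)"
    by (rule integrable_poly_mult[OF moments])+
  then show ?case
    unfolding split using Cons integral_localized_square[OF moments] by (simp add: integral_add)
qed simp

lemma integral_localizing_nonneg:
  fixes M :: "real measure"
  assumes moments: "\<And>k. integrable M (\<lambda>x. x ^ k)"
    and psd: "psd d (hankel_loc d \<theta> (moment_seq M))" and sos: "sos_deg d \<sigma>"
  shows "0 \<le> integral\<^sup>L M (\<lambda>x. poly \<theta> x * poly \<sigma> x)"
proof -
  obtain ps where \<sigma>: "\<sigma> = (\<Sum>p\<leftarrow>ps. p ^ 2)" and deg: "\<forall>p\<in>set ps. degree p \<le> d"
    using sos by (rule sos_deg_decompose)
  have "0 \<le> (\<Sum>p\<leftarrow>ps. quad_form (hankel_loc d \<theta> (moment_seq M)) d (coeff p))"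
    by (intro sum_list_nonneg) (use psd in \<open>auto simp: psd_iff_quad_form\<close>)
  then show ?thesis
    unfolding \<sigma> integral_localized_sos[OF moments deg] .
qed

lemma localizing_kernel:
  fixes M :: "real measure"
  assumes moments: "\<And>k. integrable M (\<lambda>x. x ^ k)"
    and psd: "psd d (hankel_loc d \<theta> (moment_seq M))"
    and deg: "\<forall>p\<in>set ps. degree p \<le> d"
    and zero: "integral\<^sup>L M (\<lambda>x. poly \<theta> x * poly (\<Sum>p\<leftarrow>ps. p ^ 2) x) = 0"
  shows "\<forall>p\<in>set ps. \<forall>i\<le>d. (\<Sum>j\<le>d. hankel_loc d \<theta> (moment_seq M) i j * coeff p j) = 0"
proof
  fix p assume "p \<in> set ps"
  define H where "H = hankel_loc d \<theta> (moment_seq M)"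
  have nonneg: "x \<in> set (map (\<lambda>p. quad_form H d (coeff p)) ps) \<Longrightarrow> 0 \<le> x" for x
    using psd by (auto simp: psd_iff_quad_form H_def)
  have "(\<Sum>p\<leftarrow>ps. quad_form H d (coeff p)) = 0"
    using zero integral_localized_sos[OF moments deg] by (simp add: H_def)
  then have "quad_form H d (coeff p) = 0"
    using sum_list_nonneg_eq_0_iff[of "map (\<lambda>p. quad_form H d (coeff p)) ps"] nonneg
      \<open>p \<in> set ps\<close> by simp
  moreover have "H i j = H j i" for i j
    by (simp add: H_def hankel_loc_def add.commute)
  ultimately show "\<forall>i\<le>d. (\<Sum>j\<le>d. hankel_loc d \<theta> (moment_seq M) i j * coeff p j) = 0"
    using psd_null_vector_in_kernel[of H d] psd unfolding H_def by blast
qed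

lemma first_moment_bounds:
  fixes M :: "real measure"
  assumes moments: "\<And>k. integrable M (\<lambda>x. x ^ k)"
    and sos: "sos_deg d \<sigma>" and mass: "integral\<^sup>L M (poly \<sigma>) = 1"
  shows "psd d (hankel_loc d (theta a) (moment_seq M)) \<Longrightarrow> a \<le> integral\<^sup>L M (\<lambda>x. x * poly \<sigma> x)"
    and "psd d (hankel_loc d (- theta b) (moment_seq M)) \<Longrightarrow> integral\<^sup>L M (\<lambda>x. x * poly \<sigma> x) \<le> b"
  using integral_localizing_nonneg[OF moments _ sos, of "theta a"]
    integral_localizing_nonneg[OF moments _ sos, of "- theta b"]
  by (simp_all add: integral_affine_times_poly[OF moments] mass)

(* A vector w with N(w) > 0, rescaled to a polynomial p with N(coeff p) = 1, gives a feasible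
   square p^2 whose first moment is the Rayleigh quotient X(w)/N(w). *)
lemma normalized_square:
  fixes M :: "real measure"
  assumes moments: "\<And>k. integrable M (\<lambda>x. x ^ k)"
    and pos: "quad_form (hankel d (moment_seq M)) d w > 0"
  obtains \<sigma> where "sos_deg d \<sigma>" and "integral\<^sup>L M (poly \<sigma>) = 1"
    and "integral\<^sup>L M (\<lambda>x. x * poly \<sigma> x)
           = quad_form (hankel_loc d [:0, 1:] (moment_seq M)) d w / quad_form (hankel d (moment_seq M)) d w"
proof -
  define y where "y = moment_seq M"
  define c where "c = 1 / sqrt (quad_form (hankel d y) d w)"
  define p where "p = (\<Sum>i\<le>d. monom (c * w i) i)"
  have coeff_p: "coeff p i = (if i \<le> d then c * w i else 0)" for i
    by (simp add: p_def coeff_sum)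
  have deg: "degree p \<le> d" by (rule degree_le) (simp add: coeff_p)
  have form: "quad_form (hankel_loc d \<theta> y) d (coeff p) = c ^ 2 * quad_form (hankel_loc d \<theta> y) d w"
    for \<theta>
    by (simp add: quad_form_cong[of d "coeff p" "\<lambda>i. c * w i"] coeff_p quad_form_scale)
  have c_sq: "c ^ 2 = 1 / quad_form (hankel d y) d w"
    using pos by (simp add: c_def y_def power_divide)
  have "sos_deg d (p ^ 2)"
    unfolding sos_deg_def
    using degree_power_le[of p 2] deg by (auto intro!: exI[of _ "[p]"])
  moreover have "poly (p ^ 2) = (\<lambda>x. poly p x ^ 2)" by (simp add: fun_eq_iff)
  then have "integral\<^sup>L M (poly (p ^ 2)) = 1"
    using integral_localized_square[OF moments deg, of 1] form[of 1] c_sq pos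
    by (simp add: hankel_def y_def)
  moreover have "integral\<^sup>L M (\<lambda>x. x * poly (p ^ 2) x)
      = quad_form (hankel_loc d [:0, 1:] y) d w / quad_form (hankel d y) d w"
    using integral_localized_square[OF moments deg, of "[:0, 1:]"] form[of "[:0, 1:]"] c_sq
    by (simp add: y_def)
  ultimately show ?thesis using that unfolding y_def by blast
qed

lemma lower_optimum:
  fixes M :: "real measure"
  assumes moments: "\<And>k. integrable M (\<lambda>x. x ^ k)" and pd: "pd d (hankel d (moment_seq M))"
  obtains a \<sigma> where "psd d (hankel_loc d (theta a) (moment_seq M))"
    and "\<And>a'. psd d (hankel_loc d (theta a') (moment_seq M)) \<Longrightarrow> a' \<le> a"
    and "sos_deg d \<sigma>" and "integral\<^sup>L M (poly \<sigma>) = 1"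
    and "integral\<^sup>L M (\<lambda>x. x * poly \<sigma> x) = a"
proof -
  obtain w a where pos: "quad_form (hankel d (moment_seq M)) d w > 0"
    and quotient: "quad_form (hankel_loc d [:0, 1:] (moment_seq M)) d w
                     = a * quad_form (hankel d (moment_seq M)) d w"
    and "psd d (hankel_loc d (theta a) (moment_seq M))"
    and "\<And>a'. psd d (hankel_loc d (theta a') (moment_seq M)) \<Longrightarrow> a' \<le> a"
    by (rule localizing_lower_extremum[OF pd], rule that)
  moreover obtain \<sigma> where "sos_deg d \<sigma>" "integral\<^sup>L M (poly \<sigma>) = 1"
    "integral\<^sup>L M (\<lambda>x. x * poly \<sigma> x) = a"
    using normalized_square[OF moments pos] quotient pos by auto
  ultimately show ?thesis using that by blast
qed

lemma upper_optimum:
  fixes M :: "real measure"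
  assumes moments: "\<And>k. integrable M (\<lambda>x. x ^ k)" and pd: "pd d (hankel d (moment_seq M))"
  obtains b \<psi> where "psd d (hankel_loc d (- theta b) (moment_seq M))"
    and "\<And>b'. psd d (hankel_loc d (- theta b') (moment_seq M)) \<Longrightarrow> b \<le> b'"
    and "sos_deg d \<psi>" and "integral\<^sup>L M (poly \<psi>) = 1"
    and "integral\<^sup>L M (\<lambda>x. x * poly \<psi> x) = b"
proof -
  obtain w b where pos: "quad_form (hankel d (moment_seq M)) d w > 0"
    and quotient: "quad_form (hankel_loc d [:0, 1:] (moment_seq M)) d w
                     = b * quad_form (hankel d (moment_seq M)) d w"
    and "psd d (hankel_loc d (- theta b) (moment_seq M))"
    and "\<And>b'. psd d (hankel_loc d (- theta b') (moment_seq M)) \<Longrightarrow> b \<le> b'"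
    by (rule localizing_upper_extremum[OF pd], rule that)
  moreover obtain \<psi> where "sos_deg d \<psi>" "integral\<^sup>L M (poly \<psi>) = 1"
    "integral\<^sup>L M (\<lambda>x. x * poly \<psi> x) = b"
    using normalized_square[OF moments pos] quotient pos by auto
  ultimately show ?thesis using that by blast
qed

theorem theorem3p5:
  fixes M :: "real measure" and d :: nat
  assumes "sets M = sets borel"
    and "finite_measure M"
    and "\<And>k. integrable M (\<lambda>x. x ^ k)"
    and "\<And>n. pd n (hankel n (moment_seq M))"
  shows
    "let y = moment_seq M;
         ad = (GREATEST a. psd d (hankel_loc d (theta a) y));
         bd = (LEAST b. psd d (hankel_loc d (- theta b) y));
         S = {integral\<^sup>L M (\<lambda>x. x * poly \<sigma> x) | \<sigma>. sos_deg d \<sigma> \<and> integral\<^sup>L M (poly \<sigma>) = 1};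
         ads = Inf S;
         bds = Sup S
     in
       psd d (hankel_loc d (theta ad) y) \<and> (\<forall>a. psd d (hankel_loc d (theta a) y) \<longrightarrow> a \<le> ad) \<and>
       psd d (hankel_loc d (- theta bd) y) \<and> (\<forall>b. psd d (hankel_loc d (- theta b) y) \<longrightarrow> bd \<le> b) \<and>
       ad = ads \<and> bd = bds \<and>
       (\<exists>\<sigma>s. sos_deg d \<sigma>s \<and> integral\<^sup>L M (poly \<sigma>s) = 1 \<and>
            integral\<^sup>L M (\<lambda>x. x * poly \<sigma>s x) = ads \<and>
            integral\<^sup>L M (\<lambda>x. (x - ad) * poly \<sigma>s x) = 0 \<and>
            (\<forall>ps. (\<forall>p\<in>set ps. degree p \<le> d) \<and> \<sigma>s = (\<Sum>p\<leftarrow>ps. p ^ 2) \<longrightarrow>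
                 (\<forall>p\<in>set ps. \<forall>i\<le>d. (\<Sum>j\<le>d. hankel_loc d (theta ad) y i j * coeff p j) = 0))) \<and>
       (\<exists>\<psi>s. sos_deg d \<psi>s \<and> integral\<^sup>L M (poly \<psi>s) = 1 \<and>
            integral\<^sup>L M (\<lambda>x. x * poly \<psi>s x) = bds \<and>
            integral\<^sup>L M (\<lambda>x. (bd - x) * poly \<psi>s x) = 0)"
proof -
  note moments = assms(3)
  define y where "y = moment_seq M"
  define S where "S = {integral\<^sup>L M (\<lambda>x. x * poly \<sigma> x) | \<sigma>. sos_deg d \<sigma> \<and> integral\<^sup>L M (poly \<sigma>) = 1}"
  have pd: "pd d (hankel d (moment_seq M))" by (rule assms(4))
  obtain a \<sigma> where psd_a: "psd d (hankel_loc d (theta a) y)"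
    and max_a: "\<And>a'. psd d (hankel_loc d (theta a') y) \<Longrightarrow> a' \<le> a"
    and \<sigma>: "sos_deg d \<sigma>" "integral\<^sup>L M (poly \<sigma>) = 1" "integral\<^sup>L M (\<lambda>x. x * poly \<sigma> x) = a"
    using lower_optimum[OF moments pd] unfolding y_def by blast
  obtain b \<psi> where psd_b: "psd d (hankel_loc d (- theta b) y)"
    and min_b: "\<And>b'. psd d (hankel_loc d (- theta b') y) \<Longrightarrow> b \<le> b'"
    and \<psi>: "sos_deg d \<psi>" "integral\<^sup>L M (poly \<psi>) = 1" "integral\<^sup>L M (\<lambda>x. x * poly \<psi> x) = b"
    using upper_optimum[OF moments pd] unfolding y_def by blast
  have "a \<le> z \<and> z \<le> b" if "z \<in> S" for z
    using that first_moment_bounds[OF moments] psd_a psd_b unfolding S_def y_def by auto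
  moreover have "a \<in> S" "b \<in> S" using \<sigma> \<psi> unfolding S_def by blast+
  ultimately have inf: "Inf S = a" and sup: "Sup S = b"
    by (auto intro: cInf_eq_minimum cSup_eq_maximum)
  have ad: "(GREATEST a. psd d (hankel_loc d (theta a) y)) = a"
    using psd_a max_a by (rule Greatest_equality)
  have bd: "(LEAST b. psd d (hankel_loc d (- theta b) y)) = b"
    using psd_b min_b by (rule Least_equality)
  have zero_\<sigma>: "integral\<^sup>L M (\<lambda>x. (x - a) * poly \<sigma> x) = 0"
    and zero_\<psi>: "integral\<^sup>L M (\<lambda>x. (b - x) * poly \<psi> x) = 0"
    using \<sigma> \<psi> by (simp_all add: integral_affine_times_poly[OF moments])
  have kernel: "\<forall>p\<in>set ps. \<forall>i\<le>d. (\<Sum>j\<le>d. hankel_loc d (theta a) y i j * coeff p j) = 0"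
    if "\<forall>p\<in>set ps. degree p \<le> d" and "\<sigma> = (\<Sum>p\<leftarrow>ps. p ^ 2)" for ps
    using localizing_kernel[OF moments _ that(1), of "theta a"] psd_a zero_\<sigma> that(2)
    by (simp add: y_def)
  show ?thesis
    unfolding Let_def y_def[symmetric] S_def[symmetric] ad bd inf sup
    using psd_a max_a psd_b min_b \<sigma> \<psi> zero_\<sigma> zero_\<psi> kernel
    by (intro conjI exI[of _ \<sigma>] exI[of _ \<psi>]) auto
qed

end
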